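(* Let $\mathcal{H}$ be a hedgehog with support function $h(s)=a_0+\sum_{n\geqslant1}(a_n\cos(ns)+b_n\sin(ns))$ and let $k>2$ be an integer. Every equiangular $k$-gon circumscribed about $\mathcal{H}$ is a regular $k$-gon with its center of mass at the Steiner point of $\mathcal{H}$ if and only if \[ h(s)=a_0+a_1\cos s+b_1\sin s+\sum_{k\mid n,\ n>1}\big(a_n\cos(ns)+b_n\sin(ns)\big). \]
   Context: Write $u(s)=(\cos s,\sin s)$, $u'(s)=(-\sin s,\cos s)$. A hedgehog is a closed planar curve determined by a smooth $2\pi$-periodic function $h$ (its support function) via $\mathcal{H}(s)=h(s)u(s)+h'(s)u'(s)$; the support line of $\mathcal{H}$ with normal $u(t)$ is $\{x:\langle x,u(t)\rangle=h(t)\}$. The Steiner point of $\mathcal{H}$ is $\frac1\pi\int_0^{2\pi}h(s)u(s)\,ds=(a_1,b_1)$. For $s\in\mathbb{R}$ and $j\in\mathbb{Z}$ let $\ell_j(s)=\{x:\langle x,u(s+\tfrac{2\pi j}{k})\rangle=h(s+\tfrac{2\pi j}{k})\}$. The equiangular $k$-gon circumscribed about $\mathcal{H}$ at parameter $s$ is the polygon with vertices $v_j(s)=\ell_j(s)\cap\ell_{j+1}(s)$, $j=0,\dots,k-1$ (indices mod $k$); i.e. each of its sides lies on a support line of $\mathcal{H}$ and consecutive side normals differ by $2\pi/k$. Its center of mass is $\frac1k\sum_{j}v_j(s)$. *)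

theory Defs
  imports "HOL-Analysis.Analysis"
begin

definition unitv :: "real \<Rightarrow> real \<times> real" where
  "unitv s = (cos s, sin s)"

definition smooth_fun :: "(real \<Rightarrow> real) \<Rightarrow> bool" where
  "smooth_fun h \<longleftrightarrow> (\<forall>n x. ((deriv ^^ n) h) differentiable (at x))"

definition hedgehog_support :: "(real \<Rightarrow> real) \<Rightarrow> bool" where
  "hedgehog_support h \<longleftrightarrow> smooth_fun h \<and> (\<forall>s. h (s + 2 * pi) = h s)"

definition fourier_a0 :: "(real \<Rightarrow> real) \<Rightarrow> real" where
  "fourier_a0 h = integral {0..2*pi} h / (2 * pi)"

definition fourier_a :: "(real \<Rightarrow> real) \<Rightarrow> nat \<Rightarrow> real" where
  "fourier_a h n = integral {0..2*pi} (\<lambda>s. h s * cos (real n * s)) / pi"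

definition fourier_b :: "(real \<Rightarrow> real) \<Rightarrow> nat \<Rightarrow> real" where
  "fourier_b h n = integral {0..2*pi} (\<lambda>s. h s * sin (real n * s)) / pi"

definition steiner_point :: "(real \<Rightarrow> real) \<Rightarrow> real \<times> real" where
  "steiner_point h = (1 / pi) *\<^sub>R integral {0..2*pi} (\<lambda>s. h s *\<^sub>R unitv s)"

definition support_line :: "(real \<Rightarrow> real) \<Rightarrow> real \<Rightarrow> (real \<times> real) set" where
  "support_line h t = {x. x \<bullet> unitv t = h t}"

definition eq_line :: "(real \<Rightarrow> real) \<Rightarrow> nat \<Rightarrow> real \<Rightarrow> int \<Rightarrow> (real \<times> real) set" where
  "eq_line h k s j = support_line h (s + 2 * pi * real_of_int j / real k)"

definition eq_vertex :: "(real \<Rightarrow> real) \<Rightarrow> nat \<Rightarrow> real \<Rightarrow> nat \<Rightarrow> real \<times> real" where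
  "eq_vertex h k s j = (THE x. x \<in> eq_line h k s (int j) \<inter> eq_line h k s (int j + 1))"

definition center_of_mass :: "nat \<Rightarrow> (nat \<Rightarrow> real \<times> real) \<Rightarrow> real \<times> real" where
  "center_of_mass k v = (1 / real k) *\<^sub>R (\<Sum>j<k. v j)"

text \<open>Vertices v_0..v_{k-1} form a regular k-gon (possibly degenerate, radius 0).\<close>
definition regular_polygon :: "nat \<Rightarrow> (nat \<Rightarrow> real \<times> real) \<Rightarrow> bool" where
  "regular_polygon k v \<longleftrightarrow>
     (\<exists>c r \<theta>. \<forall>j<k. v j = c + r *\<^sub>R unitv (\<theta> + 2 * pi * real j / real k))"

end

theory Submission
  imports Defs
begin

(* Let c = (a_1, b_1) be the Steiner point, so that <c, u(t)> = a_1 cos t + b_1 sin t, and let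
   g(t) = h(t) - <c, u(t)> be h with its first harmonic removed; g(t) is the signed distance from c
   to the support line with normal u(t). An equiangular polygon is regular with centre c iff all its
   sides are at the same distance from c, so the condition on the k-gons at every parameter s says
   exactly that g has period 2 pi/k. Translating by 2 pi/k rotates the n-th coefficient pair
   (a_n, b_n) by the angle 2 pi n/k, which is trivial only for k dvd n, so g has period 2 pi/k iff
   its harmonics with k not dividing n vanish. Since h is smooth, its Fourier series converges to
   it pointwise (Dirichlet kernel and Riemann-Lebesgue lemma), which turns this into the stated
   expansion. *)

section \<open>Periodic functions and trigonometric integrals\<close>

lemma periodic_int_multiple:
  assumes per: "\<And>s. G (s + 2 * pi) = G s"
  shows "G (s + 2 * pi * of_int m) = G s"
proof (induction m arbitrary: s rule: int_induct[where k = 0])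
  case (step1 i)
  have "G (s + 2 * pi * of_int (i + 1)) = G ((s + 2 * pi * of_int i) + 2 * pi)"
    by (simp add: algebra_simps)
  then show ?case using per step1 by simp
next
  case (step2 i)
  have "G (s + 2 * pi * of_int (i - 1)) = G ((s + 2 * pi * of_int (i - 1)) + 2 * pi)"
    using per by simp
  also have "\<dots> = G (s + 2 * pi * of_int i)"
    by (simp add: algebra_simps)
  finally show ?case using step2 by simp
qed simp

lemma integral_periodic_translate:
  fixes G :: "real \<Rightarrow> 'a::banach"
  assumes cont: "continuous_on UNIV G" and per: "\<And>s. G (s + 2 * pi) = G s"
  shows "integral {c..c + 2 * pi} G = integral {0..2 * pi} G"
proof -
  define m where "m = \<lfloor>c / (2 * pi)\<rfloor>"
  define c' where "c' = c - 2 * pi * of_int m"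
  have "of_int m \<le> c / (2 * pi)" "c / (2 * pi) < of_int m + 1"
    unfolding m_def by linarith+
  then have c': "0 \<le> c'" "c' \<le> 2 * pi"
    unfolding c'_def by (simp_all add: field_simps)
  have int: "G integrable_on {x..y}" for x y
    using cont by (simp add: continuous_on_subset integrable_continuous_interval)
  have "integral {c..c + 2 * pi} G = integral {c'..c' + 2 * pi} (\<lambda>x. G (x + 2 * pi * of_int m))"
    using integral_shift_real_ivl[of c "2 * pi * of_int m" "c + 2 * pi" G]
    by (simp add: c'_def algebra_simps)
  also have "\<dots> = integral {c'..2 * pi} G + integral {2 * pi..c' + 2 * pi} G"
    using periodic_int_multiple[of G, OF per] c' int
      Henstock_Kurzweil_Integration.integral_combine[where a = c' and c = "2 * pi" and b = "c' + 2 * pi" and f = G]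
    by simp
  also have "integral {2 * pi..c' + 2 * pi} G = integral {0..c'} G"
    using integral_shift_real_ivl[of "2 * pi" "2 * pi" "c' + 2 * pi" G] per by simp
  also have "integral {c'..2 * pi} G + integral {0..c'} G = integral {0..2 * pi} G"
    using Henstock_Kurzweil_Integration.integral_combine[where a = 0 and c = c' and b = "2 * pi" and f = G] c' int
    by (simp add: add.commute)
  finally show ?thesis .
qed

corollary integral_periodic_shift:
  fixes G :: "real \<Rightarrow> 'a::banach"
  assumes "continuous_on UNIV G" and "\<And>s. G (s + 2 * pi) = G s"
  shows "integral {0..2 * pi} (\<lambda>s. G (s + c)) = integral {0..2 * pi} G"
  using integral_shift_real_ivl[of c c "c + 2 * pi" G] integral_periodic_translate[OF assms, of c]
  by simp

lemma has_integral_cos_multiple: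
  assumes "n \<ge> 1"
  shows "((\<lambda>s. cos (real n * s)) has_integral 0) {0..2 * pi}"
proof -
  have "((\<lambda>s. cos (real n * s)) has_integral
      sin (real n * (2 * pi)) / real n - sin (real n * 0) / real n) {0..2 * pi}"
    using assms
    by (intro fundamental_theorem_of_calculus)
      (auto intro!: derivative_eq_intros simp: has_real_derivative_iff_has_vector_derivative[symmetric])
  moreover have "sin (real n * (2 * pi)) = 0"
    using sin_2npi[of n] by (simp add: mult.commute mult.left_commute)
  ultimately show ?thesis by simp
qed

lemma has_integral_sin_multiple:
  assumes "n \<ge> 1"
  shows "((\<lambda>s. sin (real n * s)) has_integral 0) {0..2 * pi}"
proof -
  have "((\<lambda>s. sin (real n * s)) has_integral
      - cos (real n * (2 * pi)) / real n - - cos (real n * 0) / real n) {0..2 * pi}"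
    using assms
    by (intro fundamental_theorem_of_calculus)
      (auto intro!: derivative_eq_intros simp: has_real_derivative_iff_has_vector_derivative[symmetric])
  moreover have "cos (real n * (2 * pi)) = 1"
    using cos_2npi[of n] by (simp add: mult.commute mult.left_commute)
  ultimately show ?thesis by simp
qed

lemma has_integral_first_harmonic_times_harmonic:
  assumes "n \<ge> 2"
  shows "((\<lambda>s. cos s * cos (real n * s)) has_integral 0) {0..2 * pi}"
    and "((\<lambda>s. sin s * cos (real n * s)) has_integral 0) {0..2 * pi}"
    and "((\<lambda>s. cos s * sin (real n * s)) has_integral 0) {0..2 * pi}"
    and "((\<lambda>s. sin s * sin (real n * s)) has_integral 0) {0..2 * pi}"
proof -
  have shift: "real (n - 1) * s = real n * s - s" "real (n + 1) * s = real n * s + s" for s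
    using assms by (simp_all add: of_nat_diff algebra_simps)
  have n: "n - 1 \<ge> 1" "n + 1 \<ge> 1" using assms by auto
  note C = has_integral_cos_multiple[OF n(1)] has_integral_cos_multiple[OF n(2)]
  note S = has_integral_sin_multiple[OF n(1)] has_integral_sin_multiple[OF n(2)]
  have "(\<lambda>s. cos s * cos (real n * s)) = (\<lambda>s. (cos (real (n - 1) * s) + cos (real (n + 1) * s)) / 2)"
    "(\<lambda>s. sin s * cos (real n * s)) = (\<lambda>s. (sin (real (n + 1) * s) - sin (real (n - 1) * s)) / 2)"
    "(\<lambda>s. cos s * sin (real n * s)) = (\<lambda>s. (sin (real (n - 1) * s) + sin (real (n + 1) * s)) / 2)"
    "(\<lambda>s. sin s * sin (real n * s)) = (\<lambda>s. (cos (real (n - 1) * s) - cos (real (n + 1) * s)) / 2)"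
    unfolding shift by (simp_all add: cos_add cos_diff sin_add sin_diff)
  then show "((\<lambda>s. cos s * cos (real n * s)) has_integral 0) {0..2 * pi}"
    and "((\<lambda>s. sin s * cos (real n * s)) has_integral 0) {0..2 * pi}"
    and "((\<lambda>s. cos s * sin (real n * s)) has_integral 0) {0..2 * pi}"
    and "((\<lambda>s. sin s * sin (real n * s)) has_integral 0) {0..2 * pi}"
    using has_integral_divide[OF has_integral_add[OF C], of 2]
      has_integral_divide[OF has_integral_diff[OF S(2,1)], of 2]
      has_integral_divide[OF has_integral_add[OF S], of 2]
      has_integral_divide[OF has_integral_diff[OF C], of 2]
    by simp_all
qed

lemma fourier_coeffs_add_first_harmonic:
  assumes cont: "continuous_on UNIV f" and n: "n \<ge> 2"
  shows "fourier_a (\<lambda>s. f s + a * cos s + b * sin s) n = fourier_a f n"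
    and "fourier_b (\<lambda>s. f s + a * cos s + b * sin s) n = fourier_b f n"
proof -
  have int: "(\<lambda>s. f s * w (real n * s)) integrable_on {0..2 * pi}" if "continuous_on UNIV w" for w
    using that cont by (intro integrable_continuous_interval continuous_intros)
      (auto intro: continuous_on_subset continuous_on_compose2[of UNIV w])
  note I = has_integral_first_harmonic_times_harmonic[OF n]
  have "((\<lambda>s. f s * w (real n * s) + a * (cos s * w (real n * s)) + b * (sin s * w (real n * s)))
          has_integral integral {0..2 * pi} (\<lambda>s. f s * w (real n * s))) {0..2 * pi}"
    if "continuous_on UNIV w" "((\<lambda>s. cos s * w (real n * s)) has_integral 0) {0..2 * pi}"
      "((\<lambda>s. sin s * w (real n * s)) has_integral 0) {0..2 * pi}" for w
    using has_integral_add[OF has_integral_add[OF integrable_integral[OF int[OF that(1)]]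
          has_integral_mult_right[OF that(2)]] has_integral_mult_right[OF that(3)]]
    by simp
  from this[of cos] this[of sin] I show
    "fourier_a (\<lambda>s. f s + a * cos s + b * sin s) n = fourier_a f n"
    "fourier_b (\<lambda>s. f s + a * cos s + b * sin s) n = fourier_b f n"
    unfolding fourier_a_def fourier_b_def
    by (auto simp: integral_unique algebra_simps continuous_on_cos continuous_on_sin)
qed

lemma rotation_fixed_point_eq_0:
  fixes \<beta> x y :: real
  assumes "cos \<beta> \<noteq> 1" and "x = cos \<beta> * x - sin \<beta> * y" and "y = sin \<beta> * x + cos \<beta> * y"
  shows "x = 0" and "y = 0"
proof -
  have sc: "sin \<beta> ^ 2 + cos \<beta> ^ 2 = 1" by simp
  have "(2 - 2 * cos \<beta>) * x =
      (1 - cos \<beta>) * ((1 - cos \<beta>) * x + sin \<beta> * y) - sin \<beta> * (- sin \<beta> * x + (1 - cos \<beta>) * y)"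
    "(2 - 2 * cos \<beta>) * y =
      sin \<beta> * ((1 - cos \<beta>) * x + sin \<beta> * y) + (1 - cos \<beta>) * (- sin \<beta> * x + (1 - cos \<beta>) * y)"
    using sc by algebra+
  moreover have "(1 - cos \<beta>) * x + sin \<beta> * y = 0" "- sin \<beta> * x + (1 - cos \<beta>) * y = 0"
    using assms(2,3) by (simp_all add: algebra_simps)
  ultimately show "x = 0" "y = 0" using assms(1) by simp_all
qed

lemma cos_2pi_multiple_div_ne_1:
  assumes k: "k > 0" and nd: "\<not> k dvd n"
  shows "cos (real n * (2 * pi / real k)) \<noteq> 1"
proof
  assume "cos (real n * (2 * pi / real k)) = 1"
  then obtain m :: int where "real n * (2 * pi / real k) = real_of_int m * 2 * pi"
    using cos_one_2pi_int by auto
  then have "real n = real_of_int m * real k" using k by (simp add: field_simps)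
  then have "int n = m * int k" by (metis of_int_eq_iff of_int_mult of_int_of_nat_eq)
  then show False using nd by (metis dvd_triv_right int_dvd_int_iff)
qed

lemma fourier_coeffs_vanish_if_periodic:
  fixes g :: "real \<Rightarrow> real"
  assumes cont: "continuous_on UNIV g" and per: "\<And>s. g (s + 2 * pi) = g s"
    and perk: "\<And>s. g (s + 2 * pi / real k) = g s" and k: "k > 0" and nd: "\<not> k dvd n"
  shows "fourier_a g n = 0" and "fourier_b g n = 0"
proof -
  define \<alpha> where "\<alpha> = 2 * pi / real k"
  define \<beta> where "\<beta> = real n * \<alpha>"
  define Ic where "Ic = integral {0..2 * pi} (\<lambda>s. g s * cos (real n * s))"
  define Is where "Is = integral {0..2 * pi} (\<lambda>s. g s * sin (real n * s))"
  have cg: "continuous_on S g" for S using cont continuous_on_subset by blast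
  have int: "(\<lambda>s. g s * cos (real n * s)) integrable_on {0..2 * pi}"
    "(\<lambda>s. g s * sin (real n * s)) integrable_on {0..2 * pi}"
    by (intro integrable_continuous_interval continuous_intros cg)+
  have shift: "integral {0..2 * pi} (\<lambda>s. g (s + \<alpha>) * w (real n * (s + \<alpha>))) =
      integral {0..2 * pi} (\<lambda>s. g s * w (real n * s))"
    if "continuous_on UNIV w" "\<And>t. w (t + 2 * pi * real n) = w t" for w
  proof (rule integral_periodic_shift)
    show "continuous_on UNIV (\<lambda>s. g s * w (real n * s))"
      using that(1) by (intro continuous_intros cg) (auto intro: continuous_on_compose2[of UNIV w])
    show "g (s + 2 * pi) * w (real n * (s + 2 * pi)) = g s * w (real n * s)" for s
      using per that(2)[of "real n * s"] by (simp add: algebra_simps)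
  qed
  have "cos (t + 2 * pi * real n) = cos t" "sin (t + 2 * pi * real n) = sin t" for t
    using cos_2npi[of n] sin_2npi[of n] by (simp_all add: cos_add sin_add mult.commute mult.left_commute)
  note shift_cos = shift[of cos, OF continuous_on_cos[OF continuous_on_id] this(1)]
    and shift_sin = shift[of sin, OF continuous_on_sin[OF continuous_on_id] this(2)]
  have "Ic = integral {0..2 * pi} (\<lambda>s. cos \<beta> * (g s * cos (real n * s)) - sin \<beta> * (g s * sin (real n * s)))"
    using shift_cos perk by (simp add: Ic_def \<alpha>_def \<beta>_def distrib_left cos_add algebra_simps)
  also have "\<dots> = cos \<beta> * Ic - sin \<beta> * Is"
    by (simp add: Ic_def Is_def integral_diff integrable_on_mult_right int)
  finally have rot_c: "Ic = cos \<beta> * Ic - sin \<beta> * Is" .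
  have "Is = integral {0..2 * pi} (\<lambda>s. sin \<beta> * (g s * cos (real n * s)) + cos \<beta> * (g s * sin (real n * s)))"
    using shift_sin perk by (simp add: Is_def \<alpha>_def \<beta>_def distrib_left sin_add algebra_simps)
  also have "\<dots> = sin \<beta> * Ic + cos \<beta> * Is"
    by (simp add: Ic_def Is_def integral_add integrable_on_mult_right int)
  finally have rot_s: "Is = sin \<beta> * Ic + cos \<beta> * Is" .
  have "cos \<beta> \<noteq> 1"
    using cos_2pi_multiple_div_ne_1[OF k nd] by (simp add: \<beta>_def \<alpha>_def)
  from rotation_fixed_point_eq_0[OF this rot_c rot_s] show "fourier_a g n = 0" "fourier_b g n = 0"
    by (simp_all add: fourier_a_def fourier_b_def Ic_def Is_def)
qed

section \<open>Pointwise convergence of Fourier series\<close>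

definition fourier_term :: "(real \<Rightarrow> real) \<Rightarrow> nat \<Rightarrow> real \<Rightarrow> real" where
  "fourier_term f n x = fourier_a f n * cos (real n * x) + fourier_b f n * sin (real n * x)"

definition dirichlet_kernel :: "nat \<Rightarrow> real \<Rightarrow> real" where
  "dirichlet_kernel N t = 1 / 2 + (\<Sum>n = 1..N. cos (real n * t))"

lemma dirichlet_kernel_closed_form:
  "2 * sin (t / 2) * dirichlet_kernel N t = sin ((real N + 1 / 2) * t)"
proof (induction N)
  case (Suc N)
  have "2 * sin (t / 2) * dirichlet_kernel (Suc N) t
        = 2 * sin (t / 2) * dirichlet_kernel N t + 2 * sin (t / 2) * cos (real (Suc N) * t)"
    by (simp add: dirichlet_kernel_def algebra_simps)
  also have "\<dots> = sin ((real N + 1 / 2) * t) +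
      (sin (real (Suc N) * t + t / 2) - sin (real (Suc N) * t - t / 2))"
    using Suc by (simp add: sin_add sin_diff)
  also have "real (Suc N) * t - t / 2 = (real N + 1 / 2) * t"
    by (simp add: algebra_simps)
  also have "real (Suc N) * t + t / 2 = (real (Suc N) + 1 / 2) * t"
    by (simp add: algebra_simps)
  finally show ?case by simp
qed (simp add: dirichlet_kernel_def)

lemma dirichlet_kernel_periodic: "dirichlet_kernel N (t + 2 * pi) = dirichlet_kernel N t"
proof -
  have "cos (real n * (t + 2 * pi)) = cos (real n * t)" for n
    using cos_2npi[of n] sin_2npi[of n] by (simp add: distrib_left cos_add mult.commute mult.left_commute)
  then show ?thesis by (simp add: dirichlet_kernel_def)
qed

lemma has_integral_fourier_partial_sum:
  fixes f :: "real \<Rightarrow> real"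
  assumes cont: "continuous_on UNIV f"
  shows "((\<lambda>s. f s * dirichlet_kernel N (s - x)) has_integral
           pi * (fourier_a0 f + (\<Sum>n = 1..N. fourier_term f n x))) {0..2 * pi}"
proof -
  have cf: "continuous_on S f" for S using cont continuous_on_subset by blast
  have h0: "(f has_integral 2 * pi * fourier_a0 f) {0..2 * pi}"
    using integrable_integral[OF integrable_continuous_interval[OF cf]] by (simp add: fourier_a0_def)
  have "(\<lambda>s. f s * cos (real n * s)) integrable_on {0..2 * pi}"
    and "(\<lambda>s. f s * sin (real n * s)) integrable_on {0..2 * pi}" for n
    by (intro integrable_continuous_interval continuous_intros cf)+
  from this[THEN integrable_integral]
  have hc: "((\<lambda>s. f s * cos (real n * s)) has_integral pi * fourier_a f n) {0..2 * pi}"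
    and hs: "((\<lambda>s. f s * sin (real n * s)) has_integral pi * fourier_b f n) {0..2 * pi}" for n
    by (simp_all add: fourier_a_def fourier_b_def)
  have "((\<lambda>s. f s / 2 + (\<Sum>n = 1..N. cos (real n * x) * (f s * cos (real n * s)) +
                                         sin (real n * x) * (f s * sin (real n * s))))
        has_integral 2 * pi * fourier_a0 f / 2 + (\<Sum>n = 1..N. cos (real n * x) * (pi * fourier_a f n) +
                                                        sin (real n * x) * (pi * fourier_b f n))) {0..2 * pi}"
    by (intro has_integral_add has_integral_divide has_integral_sum finite_atLeastAtMost
        has_integral_mult_right h0 hc hs)
  moreover have "(\<lambda>s. f s * dirichlet_kernel N (s - x)) =
      (\<lambda>s. f s / 2 + (\<Sum>n = 1..N. cos (real n * x) * (f s * cos (real n * s)) +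
                                   sin (real n * x) * (f s * sin (real n * s))))"
    by (simp add: dirichlet_kernel_def sum_distrib_left right_diff_distrib cos_diff algebra_simps)
  ultimately show ?thesis
    by (simp add: fourier_term_def sum_distrib_left algebra_simps)
qed

lemma has_integral_dirichlet_kernel: "((\<lambda>s. dirichlet_kernel N (s - x)) has_integral pi) {0..2 * pi}"
proof -
  have "fourier_term (\<lambda>_. 1) n x = 0" if "n \<in> {1..N}" for n
    using that by (simp add: fourier_term_def fourier_a_def fourier_b_def
        integral_unique[OF has_integral_cos_multiple] integral_unique[OF has_integral_sin_multiple])
  moreover have "fourier_a0 (\<lambda>_. 1) = 1"
    by (simp add: fourier_a0_def)
  ultimately show ?thesis
    using has_integral_fourier_partial_sum[of "\<lambda>_. 1" N x] by simp
qed

lemma abs_integral_mult_le: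
  fixes u w :: "real \<Rightarrow> real"
  assumes "a \<le> b" and "continuous_on {a..b} u" and "continuous_on {a..b} w"
    and "\<And>s. s \<in> {a..b} \<Longrightarrow> \<bar>u s\<bar> \<le> B" and "\<And>s. s \<in> {a..b} \<Longrightarrow> \<bar>w s\<bar> \<le> 1"
  shows "\<bar>integral {a..b} (\<lambda>s. u s * w s)\<bar> \<le> B * (b - a)"
proof -
  have "norm (integral {a..b} (\<lambda>s. u s * w s)) \<le> B * (b - a)"
  proof (rule integral_bound)
    show "norm (u s * w s) \<le> B" if "s \<in> {a..b}" for s
    proof -
      have "\<bar>u s\<bar> * \<bar>w s\<bar> \<le> \<bar>u s\<bar>"
        using assms(5)[OF that] by (rule mult_left_le) simp
      then show ?thesis using assms(4)[OF that] by (simp add: abs_mult)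
    qed
  qed (use assms in \<open>auto intro: continuous_on_mult\<close>)
  then show ?thesis by simp
qed

lemma riemann_lebesgue_polynomial:
  fixes p :: "real \<Rightarrow> real"
  assumes p: "polynomial_function p" and ab: "a \<le> b"
  obtains C where "\<And>l. l > 0 \<Longrightarrow> \<bar>integral {a..b} (\<lambda>s. p s * sin (l * (s - x)))\<bar> \<le> C / l"
proof -
  obtain p' where p': "polynomial_function p'" "\<And>s. (p has_real_derivative p' s) (at s)"
    using has_vector_derivative_polynomial_function[OF p]
    by (metis has_real_derivative_iff_has_vector_derivative)
  have cp: "continuous_on {a..b} p" and cp': "continuous_on {a..b} p'"
    using continuous_on_polymonial_function p p'(1) by blast+
  obtain M where M: "\<And>s. s \<in> {a..b} \<Longrightarrow> \<bar>p s\<bar> \<le> M"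
    using compact_imp_bounded[OF compact_continuous_image[OF cp compact_Icc]]
    unfolding bounded_iff by force
  obtain M' where M': "\<And>s. s \<in> {a..b} \<Longrightarrow> \<bar>p' s\<bar> \<le> M'"
    using compact_imp_bounded[OF compact_continuous_image[OF cp' compact_Icc]]
    unfolding bounded_iff by force
  show ?thesis
  proof (rule that)
    fix l :: real assume l: "l > 0"
    have bound: "\<bar>y / l\<bar> \<le> B / l" if "\<bar>y\<bar> \<le> B" for y B :: real
      using that l by (simp add: abs_divide divide_right_mono)
    define F where "F s = - (p s / l) * cos (l * (s - x))" for s
    \<comment> \<open>integration by parts: the boundary terms and the remaining integral are both \<open>O(1/l)\<close>\<close>
    have "(F has_real_derivative (p s * sin (l * (s - x)) - p' s / l * cos (l * (s - x)))) (at s)" for s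
      unfolding F_def using l by (auto intro!: derivative_eq_intros p'(2) simp: field_simps)
    then have ftc: "((\<lambda>s. p s * sin (l * (s - x)) - p' s / l * cos (l * (s - x))) has_integral
        F b - F a) {a..b}"
      using ab by (intro fundamental_theorem_of_calculus)
        (auto simp: has_real_derivative_iff_has_vector_derivative[symmetric] intro: has_field_derivative_at_within)
    have "(\<lambda>s. p' s / l * cos (l * (s - x))) integrable_on {a..b}"
      by (intro integrable_continuous_interval continuous_intros cp') (use l in simp)
    from has_integral_add[OF ftc integrable_integral[OF this]]
    have "((\<lambda>s. p s * sin (l * (s - x))) has_integral
        F b - F a + integral {a..b} (\<lambda>s. p' s / l * cos (l * (s - x)))) {a..b}"
      by simp
    then have eq: "integral {a..b} (\<lambda>s. p s * sin (l * (s - x))) =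
        F b - F a + integral {a..b} (\<lambda>s. p' s / l * cos (l * (s - x)))"
      by (rule integral_unique)
    have "\<bar>F s\<bar> \<le> M / l" if "s \<in> {a..b}" for s
    proof -
      have "\<bar>p s / l\<bar> * \<bar>cos (l * (s - x))\<bar> \<le> \<bar>p s / l\<bar>"
        by (rule mult_left_le) simp_all
      then show ?thesis using bound[OF M[OF that]] by (simp add: F_def abs_mult)
    qed
    then have "\<bar>F b\<bar> \<le> M / l" "\<bar>F a\<bar> \<le> M / l"
      using ab by simp_all
    moreover have "\<bar>integral {a..b} (\<lambda>s. p' s / l * cos (l * (s - x)))\<bar> \<le> M' / l * (b - a)"
      using ab cp' l bound[OF M'] by (intro abs_integral_mult_le) (auto intro!: continuous_intros)
    moreover have "(2 * M + M' * (b - a)) / l = M / l + M / l + M' / l * (b - a)"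
      using l by (simp add: field_simps)
    ultimately show "\<bar>integral {a..b} (\<lambda>s. p s * sin (l * (s - x)))\<bar> \<le> (2 * M + M' * (b - a)) / l"
      unfolding eq by linarith
  qed
qed

lemma riemann_lebesgue:
  fixes q :: "real \<Rightarrow> real"
  assumes q: "continuous_on {a..b} q"
  shows "((\<lambda>l. integral {a..b} (\<lambda>s. q s * sin (l * (s - x)))) \<longlongrightarrow> 0) at_top"
proof (cases "a \<le> b")
  case ab: True
  show ?thesis
  proof (rule tendstoI)
    fix e :: real assume e: "e > 0"
    define d where "d = e / (2 * (b - a + 1))"
    have d: "d > 0" "d * (b - a) < e / 2"
      using e ab by (simp_all add: d_def field_simps)
    obtain p where p: "polynomial_function p" and pq: "\<And>s. s \<in> {a..b} \<Longrightarrow> \<bar>q s - p s\<bar> < d"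
      using Stone_Weierstrass_polynomial_function[OF compact_Icc q d(1)] by auto
    have cp: "continuous_on {a..b} p" using continuous_on_polymonial_function p by blast
    obtain C where C: "\<And>l. l > 0 \<Longrightarrow> \<bar>integral {a..b} (\<lambda>s. p s * sin (l * (s - x)))\<bar> \<le> C / l"
      using riemann_lebesgue_polynomial[OF p ab] by blast
    show "eventually (\<lambda>l. dist (integral {a..b} (\<lambda>s. q s * sin (l * (s - x)))) 0 < e) at_top"
      using eventually_gt_at_top[of "2 * \<bar>C\<bar> / e"]
    proof (rule eventually_mono)
      fix l assume l: "2 * \<bar>C\<bar> / e < l"
      have "0 \<le> 2 * \<bar>C\<bar> / e" using e by simp
      then have l0: "l > 0" using l by linarith
      have "C / l < e / 2"
        using l e l0 by (simp add: field_simps)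
      then have P: "\<bar>integral {a..b} (\<lambda>s. p s * sin (l * (s - x)))\<bar> < e / 2"
        using C[OF l0] by linarith
      have "\<bar>integral {a..b} (\<lambda>s. (q s - p s) * sin (l * (s - x)))\<bar> \<le> d * (b - a)"
        using ab q cp pq by (intro abs_integral_mult_le) (auto intro!: continuous_intros less_imp_le)
      then have Q: "\<bar>integral {a..b} (\<lambda>s. (q s - p s) * sin (l * (s - x)))\<bar> < e / 2"
        using d by simp
      have "(\<lambda>s. (q s - p s) * sin (l * (s - x))) integrable_on {a..b}"
        "(\<lambda>s. p s * sin (l * (s - x))) integrable_on {a..b}"
        by (intro integrable_continuous_interval continuous_intros q cp)+
      from integral_add[OF this]
      have "integral {a..b} (\<lambda>s. q s * sin (l * (s - x))) =
          integral {a..b} (\<lambda>s. (q s - p s) * sin (l * (s - x))) + integral {a..b} (\<lambda>s. p s * sin (l * (s - x)))"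
        by (simp add: algebra_simps)
      then show "dist (integral {a..b} (\<lambda>s. q s * sin (l * (s - x)))) 0 < e"
        using P Q by simp
    qed
  qed
qed simp

lemma continuous_on_difference_quotient_half_sine:
  fixes f :: "real \<Rightarrow> real"
  assumes cont: "continuous_on UNIV f" and der: "(f has_real_derivative D) (at x)"
  defines "q \<equiv> \<lambda>s. if s = x then D else (f s - f x) / (2 * sin ((s - x) / 2))"
  shows "continuous_on {x - pi..x + pi} q"
proof (rule continuous_at_imp_continuous_on, rule ballI)
  fix s assume s: "s \<in> {x - pi..x + pi}"
  show "isCont q s"
  proof (cases "s = x")
    case False
    have "sin ((s - x) / 2) \<noteq> 0"
      using s False sin_eq_0_pi[of "(s - x) / 2"] by auto
    then have cont_quotient: "isCont (\<lambda>s. (f s - f x) / (2 * sin ((s - x) / 2))) s"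
      using cont by (auto intro!: continuous_intros simp: continuous_on_eq_continuous_at)
    have "eventually (\<lambda>y. y \<in> - {x}) (nhds s)"
      by (rule eventually_nhds_in_open) (use False in auto)
    then have "eventually (\<lambda>y. (f y - f x) / (2 * sin ((y - x) / 2)) = q y) (nhds s)"
      by (rule eventually_mono) (simp add: q_def)
    from isCont_cong[OF this] cont_quotient show ?thesis by simp
  next
    case True
    have "((\<lambda>y. 2 * sin ((y - x) / 2)) has_real_derivative 1) (at x)"
      by (auto intro!: derivative_eq_intros)
    then have "((\<lambda>y. ((f y - f x) / (y - x)) / ((2 * sin ((y - x) / 2) - 2 * sin ((x - x) / 2)) / (y - x)))
        \<longlongrightarrow> D / 1) (at x)"
      using der by (intro tendsto_divide) (auto simp: has_field_derivative_iff)
    moreover have "eventually (\<lambda>y. ((f y - f x) / (y - x)) /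
        ((2 * sin ((y - x) / 2) - 2 * sin ((x - x) / 2)) / (y - x)) = q y) (at x)"
      by (auto simp: eventually_at_filter q_def)
    ultimately have "(q \<longlongrightarrow> q x) (at x)"
      by (simp add: q_def Lim_transform_eventually)
    then show ?thesis using True by (simp add: isCont_def)
  qed
qed

lemma fourier_partial_sum_error:
  fixes f :: "real \<Rightarrow> real" and x D :: real
  assumes cont: "continuous_on UNIV f" and per: "\<And>s. f (s + 2 * pi) = f s"
  defines "q \<equiv> \<lambda>s. if s = x then D else (f s - f x) / (2 * sin ((s - x) / 2))"
  shows "(\<Sum>n = 1..N. fourier_term f n x) - (f x - fourier_a0 f) =
    integral {x - pi..x + pi} (\<lambda>s. q s * sin ((real N + 1 / 2) * (s - x))) / pi"
proof -
  define err where "err = (\<Sum>n = 1..N. fourier_term f n x) - (f x - fourier_a0 f)"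
  have "((\<lambda>s. (f s - f x) * dirichlet_kernel N (s - x)) has_integral pi * err) {0..2 * pi}"
    using has_integral_diff[OF has_integral_fourier_partial_sum[OF cont]
        has_integral_mult_right[OF has_integral_dirichlet_kernel, where c = "f x"]]
    by (simp add: err_def left_diff_distrib algebra_simps)
  then have "pi * err = integral {0..2 * pi} (\<lambda>s. (f s - f x) * dirichlet_kernel N (s - x))"
    by (simp add: integral_unique)
  also have "\<dots> = integral {x - pi..x - pi + 2 * pi} (\<lambda>s. (f s - f x) * dirichlet_kernel N (s - x))"
  proof (rule integral_periodic_translate[symmetric])
    show "continuous_on UNIV (\<lambda>s. (f s - f x) * dirichlet_kernel N (s - x))"
      unfolding dirichlet_kernel_def by (intro continuous_intros cont)
    fix s
    show "(f (s + 2 * pi) - f x) * dirichlet_kernel N (s + 2 * pi - x) =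
        (f s - f x) * dirichlet_kernel N (s - x)"
      using per[of s] dirichlet_kernel_periodic[of N "s - x"] by (simp add: diff_add_eq)
  qed
  also have "x - pi + 2 * pi = x + pi" by simp
  also have "integral {x - pi..x + pi} (\<lambda>s. (f s - f x) * dirichlet_kernel N (s - x)) =
      integral {x - pi..x + pi} (\<lambda>s. q s * sin ((real N + 1 / 2) * (s - x)))"
  proof (intro integral_cong)
    fix s assume s: "s \<in> {x - pi..x + pi}"
    show "(f s - f x) * dirichlet_kernel N (s - x) = q s * sin ((real N + 1 / 2) * (s - x))"
    proof (cases "s = x")
      case False
      then have "sin ((s - x) / 2) \<noteq> 0"
        using s sin_eq_0_pi[of "(s - x) / 2"] by auto
      then show ?thesis
        using False dirichlet_kernel_closed_form[of "s - x" N, symmetric] by (simp add: q_def)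
    qed (simp add: q_def)
  qed
  finally show ?thesis by (simp add: err_def field_simps)
qed

lemma fourier_series_sums:
  fixes f :: "real \<Rightarrow> real"
  assumes cont: "continuous_on UNIV f" and per: "\<And>s. f (s + 2 * pi) = f s"
    and der: "(f has_real_derivative D) (at x)"
  shows "(\<lambda>n. fourier_term f (Suc n) x) sums (f x - fourier_a0 f)"
proof -
  define q where "q \<equiv> \<lambda>s. if s = x then D else (f s - f x) / (2 * sin ((s - x) / 2))"
  define err where "err N = (\<Sum>n = 1..N. fourier_term f n x) - (f x - fourier_a0 f)" for N
  have err: "err N = integral {x - pi..x + pi} (\<lambda>s. q s * sin ((real N + 1 / 2) * (s - x))) / pi" for N
    unfolding err_def q_def by (rule fourier_partial_sum_error[OF cont per])
  have "((\<lambda>l. integral {x - pi..x + pi} (\<lambda>s. q s * sin (l * (s - x)))) \<longlongrightarrow> 0) at_top"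
    unfolding q_def by (intro riemann_lebesgue continuous_on_difference_quotient_half_sine cont der)
  moreover have "filterlim (\<lambda>N. real N + 1 / 2) at_top sequentially"
    using filterlim_tendsto_add_at_top[OF tendsto_const filterlim_real_sequentially, of "1 / 2"]
    by (simp add: add.commute)
  ultimately have "(\<lambda>N. integral {x - pi..x + pi} (\<lambda>s. q s * sin ((real N + 1 / 2) * (s - x))))
      \<longlonglongrightarrow> 0"
    by (rule filterlim_compose)
  then have "err \<longlonglongrightarrow> 0"
    unfolding err using tendsto_divide_zero by blast
  then show ?thesis
    unfolding sums_def err_def
    by (simp add: sum_bounds_lt_plus1[of "\<lambda>n. fourier_term f n x"] LIM_zero_iff)
qed

lemma fourier_term_shift_dvd:
  assumes "k > 0" and "k dvd n"
  shows "fourier_term f n (s + 2 * pi / real k) = fourier_term f n s"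
proof -
  obtain m where n: "n = k * m" using assms(2) by blast
  have "real n * (s + 2 * pi / real k) = real n * s + 2 * real m * pi"
    using assms(1) by (simp add: n field_simps)
  then show ?thesis by (simp add: fourier_term_def cos_add sin_add)
qed

lemma fourier_series_on_multiples_iff_periodic:
  fixes f :: "real \<Rightarrow> real" and k :: nat
  assumes cont: "continuous_on UNIV f" and per: "\<And>s. f (s + 2 * pi) = f s"
    and diff: "\<And>x. f differentiable (at x)" and k: "k > 1"
  defines "g \<equiv> \<lambda>s. f s - (fourier_a f 1 * cos s + fourier_b f 1 * sin s)"
  shows "(\<forall>s. f s = fourier_a0 f + fourier_a f 1 * cos s + fourier_b f 1 * sin s
              + (\<Sum>n. if k dvd n \<and> n > 1 then fourier_term f n s else 0))
         \<longleftrightarrow> (\<forall>s. g (s + 2 * pi / real k) = g s)"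
proof
  define E where "E s n = (if k dvd n \<and> n > 1 then fourier_term f n s else 0)" for s n
  assume series: "\<forall>s. f s = fourier_a0 f + fourier_a f 1 * cos s + fourier_b f 1 * sin s + suminf (E s)"
  have "E (s + 2 * pi / real k) = E s" for s
    using k by (auto simp: E_def fourier_term_shift_dvd)
  then show "\<forall>s. g (s + 2 * pi / real k) = g s"
    using series by (simp add: g_def)
next
  assume g_per: "\<forall>s. g (s + 2 * pi / real k) = g s"
  have g_cont: "continuous_on UNIV g"
    unfolding g_def by (intro continuous_intros cont)
  have vanish: "fourier_term f n x = 0" if "n \<ge> 2" "\<not> k dvd n" for n x
  proof -
    have "fourier_a g n = 0" "fourier_b g n = 0"
      using k that(2) g_per per
      by (intro fourier_coeffs_vanish_if_periodic g_cont; simp add: g_def)+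
    moreover have "fourier_a f n = fourier_a g n" "fourier_b f n = fourier_b g n"
      using fourier_coeffs_add_first_harmonic[OF g_cont that(1), of "fourier_a f 1" "fourier_b f 1"]
      by (simp_all add: g_def)
    ultimately show ?thesis
      by (simp add: fourier_term_def)
  qed
  show "\<forall>x. f x = fourier_a0 f + fourier_a f 1 * cos x + fourier_b f 1 * sin x
          + (\<Sum>n. if k dvd n \<and> n > 1 then fourier_term f n x else 0)"
  proof
    fix x
    define E where "E n = (if k dvd n \<and> n > 1 then fourier_term f n x else 0)" for n
    \<comment> \<open>\<open>E\<close> is the Fourier series of \<open>f\<close> without its terms \<open>n \<le> 1\<close>, as the others vanish unless \<open>k dvd n\<close>\<close>
    have E_Suc: "E (Suc n) = fourier_term f (Suc n) x - (if n = 0 then fourier_term f 1 x else 0)" for n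
      using k vanish[of "Suc n" x] by (auto simp: E_def)
    obtain D where "(f has_real_derivative D) (at x)"
      using diff[of x] real_differentiable_def by blast
    from sums_diff[OF fourier_series_sums[OF cont per this]
        sums_single[where i = 0 and f = "\<lambda>_. fourier_term f 1 x"]]
    have "(\<lambda>n. E (Suc n)) sums (f x - fourier_a0 f - fourier_term f 1 x)"
      by (simp add: E_Suc)
    moreover have "E 0 = 0" by (simp add: E_def)
    ultimately have "E sums (f x - fourier_a0 f - fourier_term f 1 x)"
      by (simp add: sums_Suc_iff)
    then show "f x = fourier_a0 f + fourier_a f 1 * cos x + fourier_b f 1 * sin x + suminf E"
      by (simp add: sums_iff fourier_term_def)
  qed
qed

section \<open>Equiangular polygons circumscribed about a hedgehog\<close>

lemma inner_unitv: "x \<bullet> unitv t = fst x * cos t + snd x * sin t"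
  by (cases x) (simp add: unitv_def)

lemma unitv_inner_unitv: "unitv a \<bullet> unitv b = cos (a - b)"
  by (simp add: inner_unitv unitv_def cos_diff)

lemma support_lines_meet_uniquely:
  assumes "sin (t2 - t1) \<noteq> 0"
  shows "\<exists>!y. y \<bullet> unitv t1 = c1 \<and> y \<bullet> unitv t2 = c2"
proof -
  define D where "D = sin (t2 - t1)"
  have D: "D = sin t2 * cos t1 - cos t2 * sin t1" "D \<noteq> 0"
    using assms by (simp_all add: D_def sin_diff)
  \<comment> \<open>Cramer's rule\<close>
  define y0 where "y0 = ((c1 * sin t2 - c2 * sin t1) / D, (c2 * cos t1 - c1 * cos t2) / D)"
  have "y0 \<bullet> unitv t1 = ((c1 * sin t2 - c2 * sin t1) * cos t1 + (c2 * cos t1 - c1 * cos t2) * sin t1) / D"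
    "y0 \<bullet> unitv t2 = ((c1 * sin t2 - c2 * sin t1) * cos t2 + (c2 * cos t1 - c1 * cos t2) * sin t2) / D"
    by (simp_all add: y0_def inner_unitv add_divide_distrib)
  moreover have "(c1 * sin t2 - c2 * sin t1) * cos t1 + (c2 * cos t1 - c1 * cos t2) * sin t1 = c1 * D"
    "(c1 * sin t2 - c2 * sin t1) * cos t2 + (c2 * cos t1 - c1 * cos t2) * sin t2 = c2 * D"
    by (simp_all add: D(1) algebra_simps)
  ultimately have "y0 \<bullet> unitv t1 = c1 \<and> y0 \<bullet> unitv t2 = c2"
    using D(2) by simp
  moreover have "y = y0" if "y \<bullet> unitv t1 = c1 \<and> y \<bullet> unitv t2 = c2" for y
    using that D(2) by (cases y) (auto simp: y0_def D(1) inner_unitv field_simps algebra_simps)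
  ultimately show ?thesis by blast
qed

lemma eq_vertex_eq_iff:
  assumes k: "k > 2"
  shows "eq_vertex h k s j = y \<longleftrightarrow>
    y \<bullet> unitv (s + 2 * pi * real j / real k) = h (s + 2 * pi * real j / real k) \<and>
    y \<bullet> unitv (s + 2 * pi * (real j + 1) / real k) = h (s + 2 * pi * (real j + 1) / real k)"
    (is "_ \<longleftrightarrow> ?P y")
proof -
  have "0 < 2 * pi / real k" "2 * pi / real k < pi"
    using k by (simp_all add: field_simps)
  then have "sin (2 * pi / real k) \<noteq> 0"
    using sin_gt_zero by force
  moreover have "(s + 2 * pi * (real j + 1) / real k) - (s + 2 * pi * real j / real k) = 2 * pi / real k"
    using k by (simp add: field_simps)
  ultimately have ex1: "\<exists>!y. ?P y"
    by (intro support_lines_meet_uniquely) simp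
  have "y \<in> eq_line h k s (int j) \<inter> eq_line h k s (int j + 1) \<longleftrightarrow> ?P y" for y
    by (simp add: eq_line_def support_line_def)
  then have V: "eq_vertex h k s j = (THE y. ?P y)"
    by (simp add: eq_vertex_def)
  show ?thesis
  proof
    assume "eq_vertex h k s j = y"
    then show "?P y" using theI'[OF ex1] V by simp
  next
    assume "?P y"
    then show "eq_vertex h k s j = y" using the1_equality[OF ex1] V by simp
  qed
qed

lemma sum_unitv_regular_polygon:
  assumes "k > 1"
  shows "(\<Sum>j<k. unitv (\<theta> + 2 * pi * real j / real k)) = 0"
proof -
  have "bij_betw (\<lambda>j. cis (2 * pi * real j / real k)) {..<k} {z. z ^ k = 1}"
    using assms by (intro Complex.bij_betw_roots_unity) simp
  then have "(\<Sum>j<k. cis (2 * pi * real j / real k)) = \<Sum>{z::complex. z ^ k = 1}"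
    by (rule sum.reindex_bij_betw)
  also have "\<dots> = 0"
    using assms by (rule sum_roots_unity)
  finally have "(\<Sum>j<k. cis (\<theta> + 2 * pi * real j / real k)) = 0"
    by (simp add: sum_distrib_left[symmetric] cis_mult[of \<theta>, symmetric])
  then show ?thesis
    by (simp add: unitv_def prod_eq_iff fst_sum snd_sum complex_eq_iff)
qed

lemma center_of_mass_regular_polygon:
  assumes "k > 1"
  shows "center_of_mass k (\<lambda>j. c + r *\<^sub>R unitv (\<theta> + 2 * pi * real j / real k)) = c"
  using assms sum_unitv_regular_polygon[OF assms, of \<theta>]
  by (simp add: center_of_mass_def sum.distrib scaleR_sum_right[symmetric] sum_constant_scaleR)

lemma regular_centered_imp_shift_invariant:
  assumes k: "k > 2" and reg: "regular_polygon k (eq_vertex h k s)"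
    and cm: "center_of_mass k (eq_vertex h k s) = c"
  shows "h (s + 2 * pi / real k) - c \<bullet> unitv (s + 2 * pi / real k) = h s - c \<bullet> unitv s"
proof -
  obtain c' r \<theta> where
    V: "\<And>j. j < k \<Longrightarrow> eq_vertex h k s j = c' + r *\<^sub>R unitv (\<theta> + 2 * pi * real j / real k)"
    using reg unfolding regular_polygon_def by blast
  have "(\<Sum>j<k. eq_vertex h k s j) = (\<Sum>j<k. c' + r *\<^sub>R unitv (\<theta> + 2 * pi * real j / real k))"
    by (rule sum.cong) (simp_all add: V)
  then have "c' = c"
    using cm center_of_mass_regular_polygon[of k c' r \<theta>] k by (simp add: center_of_mass_def)
  then have v0: "eq_vertex h k s 0 = c + r *\<^sub>R unitv \<theta>"
    and v1: "eq_vertex h k s 1 = c + r *\<^sub>R unitv (\<theta> + 2 * pi / real k)"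
    using V[of 0] V[of 1] k by simp_all
  have "(c + r *\<^sub>R unitv \<theta>) \<bullet> unitv s = h s"
    and "(c + r *\<^sub>R unitv (\<theta> + 2 * pi / real k)) \<bullet> unitv (s + 2 * pi / real k) = h (s + 2 * pi / real k)"
    using eq_vertex_eq_iff[OF k, of h s 0 "c + r *\<^sub>R unitv \<theta>"]
      eq_vertex_eq_iff[OF k, of h s 1 "c + r *\<^sub>R unitv (\<theta> + 2 * pi / real k)"] v0 v1 by simp_all
  moreover have "\<theta> + 2 * pi / real k - (s + 2 * pi / real k) = \<theta> - s"
    by simp
  ultimately have "h s - c \<bullet> unitv s = r * cos (\<theta> - s)"
    and "h (s + 2 * pi / real k) - c \<bullet> unitv (s + 2 * pi / real k) = r * cos (\<theta> - s)"
    by (auto simp: inner_add_left unitv_inner_unitv)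
  then show ?thesis by simp
qed

lemma eq_vertex_if_shift_invariant:
  assumes k: "k > 2"
    and inv: "\<And>t. h (t + 2 * pi / real k) - c \<bullet> unitv (t + 2 * pi / real k) = h t - c \<bullet> unitv t"
  shows "eq_vertex h k s j =
    c + ((h s - c \<bullet> unitv s) / cos (pi / real k)) *\<^sub>R unitv (s + pi / real k + 2 * pi * real j / real k)"
proof -
  define g where "g t = h t - c \<bullet> unitv t" for t
  have g_shift: "g (s + 2 * pi * real i / real k) = g s" for i
  proof (induction i)
    case (Suc i)
    have "s + 2 * pi * real (Suc i) / real k = (s + 2 * pi * real i / real k) + 2 * pi / real k"
      using k by (simp add: field_simps)
    then show ?case using inv[of "s + 2 * pi * real i / real k"] Suc by (simp add: g_def add.assoc)
  qed simp
  have "0 < pi / real k" "pi / real k < pi / 2"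
    using k by (simp_all add: field_simps)
  then have "cos (pi / real k) \<noteq> 0"
    using cos_gt_zero_pi[of "pi / real k"] by linarith
  define \<theta> where "\<theta> = s + pi / real k + 2 * pi * real j / real k"
  \<comment> \<open>the vertex lies at angle \<open>\<pi>/k\<close> from the normals of both adjacent sides\<close>
  have "\<theta> - (s + 2 * pi * real j / real k) = pi / real k"
    "\<theta> - (s + 2 * pi * (real j + 1) / real k) = - (pi / real k)"
    using k by (simp_all add: \<theta>_def field_simps)
  then have "unitv \<theta> \<bullet> unitv (s + 2 * pi * real j / real k) = cos (pi / real k)"
    "unitv \<theta> \<bullet> unitv (s + 2 * pi * (real j + 1) / real k) = cos (pi / real k)"
    unfolding unitv_inner_unitv by simp_all
  moreover have "g (s + 2 * pi * (real j + 1) / real k) = g s"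
    using g_shift[of "Suc j"] by (simp add: add.commute)
  ultimately show ?thesis
    unfolding eq_vertex_eq_iff[OF k] \<theta>_def[symmetric]
    using g_shift[of j] \<open>cos (pi / real k) \<noteq> 0\<close> by (simp add: inner_add_left g_def)
qed

lemma equiangular_regular_centered_iff:
  assumes k: "k > 2"
  shows "(\<forall>s. regular_polygon k (eq_vertex h k s) \<and> center_of_mass k (eq_vertex h k s) = c)
    \<longleftrightarrow> (\<forall>t. h (t + 2 * pi / real k) - c \<bullet> unitv (t + 2 * pi / real k) = h t - c \<bullet> unitv t)"
proof (intro iffI allI)
  show "h (t + 2 * pi / real k) - c \<bullet> unitv (t + 2 * pi / real k) = h t - c \<bullet> unitv t"
    if "\<forall>s. regular_polygon k (eq_vertex h k s) \<and> center_of_mass k (eq_vertex h k s) = c" for t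
    using that k regular_centered_imp_shift_invariant by blast
next
  fix s
  assume "\<forall>t. h (t + 2 * pi / real k) - c \<bullet> unitv (t + 2 * pi / real k) = h t - c \<bullet> unitv t"
  then have V: "eq_vertex h k s = (\<lambda>j. c + ((h s - c \<bullet> unitv s) / cos (pi / real k)) *\<^sub>R
      unitv (s + pi / real k + 2 * pi * real j / real k))"
    using eq_vertex_if_shift_invariant[OF k] by blast
  have "regular_polygon k (eq_vertex h k s)"
    unfolding V regular_polygon_def by blast
  moreover have "center_of_mass k (eq_vertex h k s) = c"
    unfolding V using k by (intro center_of_mass_regular_polygon) simp
  ultimately show "regular_polygon k (eq_vertex h k s) \<and> center_of_mass k (eq_vertex h k s) = c" ..
qed

lemma steiner_point_eq_first_coeffs:
  fixes h :: "real \<Rightarrow> real"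
  assumes "continuous_on UNIV h"
  shows "steiner_point h = (fourier_a h 1, fourier_b h 1)"
proof -
  have "(\<lambda>s. h s *\<^sub>R unitv s) integrable_on {0..2 * pi}"
    unfolding unitv_def using assms
    by (intro integrable_continuous_interval continuous_intros) (auto intro: continuous_on_subset)
  from integral_component_eq[OF this, of "(1, 0)"] integral_component_eq[OF this, of "(0, 1)"]
  show ?thesis
    unfolding steiner_point_def fourier_a_def fourier_b_def
    by (simp add: unitv_def prod_eq_iff inner_prod_def)
qed

theorem proposition4p1:
  fixes h :: "real \<Rightarrow> real" and k :: nat
  assumes "hedgehog_support h" and "k > 2"
  shows "(\<forall>s. regular_polygon k (eq_vertex h k s)
               \<and> center_of_mass k (eq_vertex h k s) = steiner_point h)
         \<longleftrightarrow>
         (\<forall>s. h s = fourier_a0 h + fourier_a h 1 * cos s + fourier_b h 1 * sin s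
                + (\<Sum>n. if k dvd n \<and> n > 1
                        then fourier_a h n * cos (real n * s) + fourier_b h n * sin (real n * s)
                        else 0))"
proof -
  \<comment> \<open>of the smoothness of \<open>h\<close> only its differentiability is needed\<close>
  have diff: "h differentiable (at x)" for x
    using assms(1) funpow_0[of deriv h] unfolding hedgehog_support_def smooth_fun_def by metis
  then have cont: "continuous_on UNIV h"
    by (simp add: continuous_at_imp_continuous_on differentiable_imp_continuous_within)
  have per: "h (s + 2 * pi) = h s" for s
    using assms(1) unfolding hedgehog_support_def by blast
  have steiner: "steiner_point h \<bullet> unitv t = fourier_a h 1 * cos t + fourier_b h 1 * sin t" for t
    by (simp add: steiner_point_eq_first_coeffs[OF cont] inner_unitv)
  show ?thesis
    unfolding equiangular_regular_centered_iff[OF assms(2)] steiner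
    using fourier_series_on_multiples_iff_periodic[OF cont per diff, of k, unfolded fourier_term_def] assms(2)
    by simp
qed

end
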